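(* For an undirected graph $G=(V,E)$ without self-loops and $\epsilon>0$, let $W_{G,\epsilon}$ be the symmetric matrix with $[W_{G,\epsilon}]_{ij}=\epsilon$ if $\{i,j\}\in E$, $0$ for distinct non-adjacent $i,j$, and diagonal entries chosen so that each row sums to $1$. For $n\ge1$ let $G_n'$ be the graph on the $2n$ vertices $u_1,\dots,u_n,v_1,\dots,v_n$ consisting of a complete graph on $\{u_1,\dots,u_n\}$, a complete graph on $\{v_1,\dots,v_n\}$, and the edges $\{u_i,v_i\}$, $i=1,\dots,n$. Consider the scalar ($d=1$) iteration $$x(t+1)=W_{G_n',\epsilon}\,P_\Omega\big[x(t)-\alpha(t)g(t)\big],\quad t\ge1,$$ with $\alpha(t)=1/\sqrt t$, $\Omega=[-a,a]$, initial condition $x_i(1)=0$ for all nodes, local functions $f_{u_i}(x)=\gamma|x|$ and $f_{v_i}(x)=\frac12|x-1|$, and $g_i(t)$ a subgradient of $f_i$ at $x_i(t)$. Then there exist constants $\gamma>1$ and $a>0$ (one may take $\gamma=3$, $a=6$), independent of $n$ and $\epsilon$, such that for every $n\ge4$ and every $\epsilon\in(0,1/n]$ there is a choice of subgradients $g_i(t)$ for all $i,t$ for which the resulting trajectory satisfies: (i) $x_{u_i}(t)=x^*=0$ for all $i$ and all $t$, where $x^*=0$ is the minimizer of $F=\frac{1}{2n}\sum_i f_i$ over $\Omega$; (ii) $x_{v_i}(t)-x^*$ is nonnegative and independent of $i$ for every $t$; and (iii) there exists $t_1$ such that for all $t\ge t_1$ and all $i$, $x_{v_i}(t)-x^*\ge\frac{\epsilon^{-1}}{16\sqrt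 t}$.
   Context: $P_\Omega$ denotes projection onto $\Omega$ applied to each entry. Since the maximum degree of $G_n'$ is $n$, $W_{G_n',\epsilon}$ is nonnegative and stochastic exactly when $\epsilon\le 1/n$; its diagonal entries are $1-n\epsilon$. *)

theory Defs
  imports Complex_Main
begin

definition W_mat :: "'v set \<Rightarrow> ('v \<Rightarrow> 'v \<Rightarrow> bool) \<Rightarrow> real \<Rightarrow> 'v \<Rightarrow> 'v \<Rightarrow> real" where
  "W_mat V E eps i j =
     (if i = j then 1 - (\<Sum>k\<in>V - {i}. if E i k then eps else 0)
      else if E i j then eps else 0)"

text \<open>The graph G_n' on vertices 0..2n-1: u_i = i and v_i = n + i for i < n.\<close>
definition Gn_verts :: "nat \<Rightarrow> nat set" where
  "Gn_verts n = {..<2*n}"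

definition Gn_edge :: "nat \<Rightarrow> nat \<Rightarrow> nat \<Rightarrow> bool" where
  "Gn_edge n i j \<longleftrightarrow> i \<noteq> j \<and> i < 2*n \<and> j < 2*n \<and>
     ((i < n \<and> j < n) \<or> (n \<le> i \<and> n \<le> j) \<or> j = i + n \<or> i = j + n)"

definition proj_box :: "real \<Rightarrow> real \<Rightarrow> real" where
  "proj_box a y = max (-a) (min a y)"

definition loc_f :: "nat \<Rightarrow> real \<Rightarrow> nat \<Rightarrow> real \<Rightarrow> real" where
  "loc_f n \<gamma> i x = (if i < n then \<gamma> * \<bar>x\<bar> else (1/2) * \<bar>x - 1\<bar>)"

definition glob_F :: "nat \<Rightarrow> real \<Rightarrow> real \<Rightarrow> real" where
  "glob_F n \<gamma> x = (1 / (2 * real n)) * (\<Sum>i\<in>Gn_verts n. loc_f n \<gamma> i x)"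

definition is_subgradient :: "(real \<Rightarrow> real) \<Rightarrow> real \<Rightarrow> real \<Rightarrow> bool" where
  "is_subgradient f x g \<longleftrightarrow> (\<forall>y. f y \<ge> f x + g * (y - x))"

definition is_trajectory ::
  "nat \<Rightarrow> real \<Rightarrow> real \<Rightarrow> real \<Rightarrow> (nat \<Rightarrow> nat \<Rightarrow> real) \<Rightarrow> (nat \<Rightarrow> nat \<Rightarrow> real) \<Rightarrow> bool" where
  "is_trajectory n \<gamma> a eps g x \<longleftrightarrow>
     (\<forall>i\<in>Gn_verts n. x 1 i = 0) \<and>
     (\<forall>t\<ge>1. \<forall>i\<in>Gn_verts n. is_subgradient (loc_f n \<gamma> i) (x t i) (g t i)) \<and>
     (\<forall>t\<ge>1. \<forall>i\<in>Gn_verts n.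
        x (t + 1) i = (\<Sum>j\<in>Gn_verts n. W_mat (Gn_verts n) (Gn_edge n) eps i j *
                          proj_box a (x t j - (1 / sqrt (real t)) * g t j)))"

end

theory Submission
  imports Defs
begin

text \<open>Keep every \<open>u\<close>-node at \<open>0\<close> by choosing its subgradient (any value in \<open>[-\<gamma>,\<gamma>]\<close>) so that
  its projected point is exactly the value which averaging with its neighbour \<open>v\<^sub>i\<close> sends back
  to \<open>0\<close>. The \<open>v\<close>-nodes then share one value \<open>y(t)\<close>, which moves by \<open>\<alpha>(t)/2\<close> towards \<open>1\<close> and
  is then multiplied by \<open>\<rho> = (1 - 2\<epsilon>)/(1 - \<epsilon>) \<approx> 1 - \<epsilon>\<close>. Below \<open>1\<close> this is
  \<open>y(t+1) = \<rho> (y(t) + 1/(2\<surd>t))\<close>, whose solution is of order \<open>1/(\<epsilon>\<surd>t)\<close>: the lower bound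
  \<open>y(t) \<ge> 1/(16\<epsilon>\<surd>t)\<close> is the claim, and the upper bound \<open>y(t) \<le> 2/(\<epsilon>\<surd>t)\<close> keeps the
  required \<open>u\<close>-subgradients inside \<open>[-3,3]\<close>.\<close>

definition contraction :: "real \<Rightarrow> real" where
  "contraction e = (1 - 2*e) / (1 - e)"

definition half_step :: "nat \<Rightarrow> real" where
  "half_step t = 1 / (2 * sqrt (real t))"

definition v_step :: "nat \<Rightarrow> real \<Rightarrow> real" where
  "v_step t y = (if y < 1 then y + half_step t else y - half_step t)"

text \<open>The common value of the \<open>v\<close>-nodes at time \<open>t \<ge> 1\<close>; the entry at \<open>t = 0\<close> is unused.\<close>

primrec v_value :: "real \<Rightarrow> nat \<Rightarrow> real" where
  "v_value e 0 = 0"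
| "v_value e (Suc t) = (if t = 0 then 0 else contraction e * v_step t (v_value e t))"

lemma contraction_bounds:
  assumes "0 < e" "e \<le> 1/4"
  shows "2/3 \<le> contraction e" "contraction e < 1"
  using assms by (auto simp: contraction_def field_simps)

lemma contraction_mult_ge_1:
  assumes "0 < e" "e \<le> 1/4"
  shows "1 \<le> contraction e * (1 + 8*e)"
proof -
  have "1 - e \<le> (1 - 2*e) * (1 + 8*e)"
    using assms by (simp add: algebra_simps power2_eq_square)
  thus ?thesis using assms by (simp add: contraction_def field_simps)
qed

lemma half_step_bounds: "1 \<le> t \<Longrightarrow> 0 < half_step t \<and> half_step t \<le> 1/2"
  by (simp add: half_step_def field_simps)

lemma v_step_bounds:
  "1 \<le> t \<Longrightarrow> 0 \<le> y \<Longrightarrow> y \<le> 3/2 \<Longrightarrow> 0 \<le> v_step t y \<and> v_step t y \<le> 3/2"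
  using half_step_bounds[of t] by (auto simp: v_step_def)

lemma v_step_le: "1 \<le> t \<Longrightarrow> v_step t y \<le> y + half_step t"
  using half_step_bounds[of t] by (auto simp: v_step_def)

lemma v_value_bounds:
  assumes "0 < e" "e \<le> 1/4" "1 \<le> t"
  shows "0 \<le> v_value e t \<and> v_value e t \<le> 3/2"
  using assms(3)
proof (induction t rule: dec_induct)
  case base
  show ?case by simp
next
  case (step t)
  have "0 \<le> v_step t (v_value e t) \<and> v_step t (v_value e t) \<le> 3/2"
    using step v_step_bounds by blast
  moreover have "0 < contraction e \<and> contraction e \<le> 1"
    using contraction_bounds[OF assms(1,2)] by simp
  ultimately show ?case
    using step.hyps mult_left_le_one_le[of "v_step t (v_value e t)" "contraction e"] by simp
qed

lemma v_value_upper: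
  assumes e: "0 < e" "e \<le> 1/4" and "1 \<le> t"
  shows "v_value e t \<le> 2 / (e * sqrt (real t))"
  using assms(3)
proof (induction t rule: dec_induct)
  case base
  show ?case using e by simp
next
  case (step t)
  define s where "s = sqrt (real t)"
  define s' where "s' = sqrt (real (Suc t))"
  have s: "1 \<le> s" "s \<le> s'" "s * s = real t" "s' * s' = real t + 1"
    using step.hyps by (auto simp: s_def s'_def)
  show ?case
  proof (cases "e * s' \<le> 4/3")
    case True
    hence "3/2 \<le> 2 / (e * s')" using e s by (simp add: field_simps)
    thus ?thesis using v_value_bounds[OF e, of "Suc t"] by (simp add: s'_def)
  next
    case False
    \<comment> \<open>once \<open>\<epsilon>\<surd>t\<close> is large, the contraction by about \<open>1 - \<epsilon>\<close> beats the decay of \<open>1/\<surd>t\<close>\<close>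
    have "1 * (e * s') \<le> s' * (e * s')"
      using e s by (intro mult_right_mono) auto
    hence "4/3 \<le> s' * (e * s')" using False by simp
    hence "1 / (real t + 1) \<le> 3*e/4" using s by (simp add: field_simps)
    hence "(1 - 3*e/4) * s' \<le> (1 - 1 / (real t + 1)) * s'"
      using s by (intro mult_right_mono) auto
    also have "\<dots> = s * s / (s' * s') * s'" using s by (simp add: field_simps)
    also have "\<dots> = s * s / s'" using s(1,2) by (simp add: field_simps)
    also have "\<dots> \<le> s" using s(1,2) mult_left_mono[OF s(2), of s] by (simp add: field_simps)
    finally have decay: "(1 - 3*e/4) * s' \<le> s" .
    have contract: "contraction e * (4 + e) \<le> 4 * (1 - 3*e/4)"
      using e by (simp add: contraction_def field_simps power2_eq_square)
    have "v_value e (Suc t) \<le> contraction e * (2 / (e * s) + half_step t)"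
      using step.hyps step.IH v_step_le[of t "v_value e t"] contraction_bounds[OF e]
      by (simp add: s_def mult_left_mono)
    also have "\<dots> = contraction e * (4 + e) / (2 * e * s)"
      using e s by (simp add: half_step_def s_def field_simps)
    also have "\<dots> \<le> 4 * (1 - 3*e/4) / (2 * e * s)"
      using contract e s by (simp add: divide_right_mono)
    also have "\<dots> = 2 * ((1 - 3*e/4) * s') / (e * s * s')"
      using e s by (simp add: field_simps)
    also have "\<dots> \<le> 2 * s / (e * s * s')"
      using decay e s by (intro divide_right_mono mult_left_mono) auto
    also have "\<dots> = 2 / (e * s')"
      using e s by (simp add: field_simps)
    finally show ?thesis by (simp add: s'_def)
  qed
qed

lemma v_value_lower:
  assumes e: "0 < e" "e \<le> 1/4" and "2 \<le> t"
  shows "min (1 / (16 * e * sqrt (real t))) (1/3) \<le> v_value e t"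
  using assms(3)
proof (induction t rule: dec_induct)
  case base
  have "v_value e 2 = contraction e / 2"
    by (simp add: numeral_2_eq_2 v_step_def half_step_def)
  thus ?case using contraction_bounds[OF e] by simp
next
  case (step t)
  define m where "m = min (1 / (16 * e * sqrt (real t))) (1/3)"
  have t: "1 \<le> t" using step.hyps by simp
  have m_mono: "min (1 / (16 * e * sqrt (real (Suc t)))) (1/3) \<le> m"
  proof -
    have "1 / (16 * e * sqrt (real (Suc t))) \<le> 1 / (16 * e * sqrt (real t))"
      using e t by (intro divide_left_mono mult_left_mono mult_pos_pos) auto
    thus ?thesis unfolding m_def by linarith
  qed
  show ?case
  proof (cases "v_value e t < 1")
    case True
    \<comment> \<open>below 1 the step adds \<open>1/(2\<surd>t) \<ge> 8\<epsilon>m\<close>, which the contraction cannot undo\<close>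
    have "8 * e * m \<le> 8 * e * (1 / (16 * e * sqrt (real t)))"
      using e unfolding m_def by (intro mult_left_mono) auto
    hence m: "0 < m" "8 * e * m \<le> half_step t"
      using e t by (auto simp: m_def half_step_def)
    have "m * (1 + 8*e) \<le> v_step t (v_value e t)"
      using True m step.IH by (simp add: v_step_def m_def algebra_simps)
    hence "contraction e * (m * (1 + 8*e)) \<le> v_value e (Suc t)"
      using t contraction_bounds[OF e] by (simp add: mult_left_mono)
    moreover have "m \<le> contraction e * (m * (1 + 8*e))"
      using mult_right_mono[OF contraction_mult_ge_1[OF e], of m] m by (simp add: algebra_simps)
    ultimately show ?thesis using m_mono by linarith
  next
    case False
    hence "1/2 \<le> v_step t (v_value e t)"
      using half_step_bounds[OF t] by (simp add: v_step_def)
    hence "2/3 * (1/2) \<le> contraction e * v_step t (v_value e t)"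
      using contraction_bounds[OF e] by (intro mult_mono) auto
    hence "1/3 \<le> v_value e (Suc t)"
      using t by simp
    thus ?thesis by linarith
  qed
qed

lemma v_value_eventually_ge:
  assumes e: "0 < e" "e \<le> 1/4"
  shows "\<exists>t1. \<forall>t\<ge>t1. inverse e / (16 * sqrt (real t)) \<le> v_value e t"
proof (intro exI allI impI)
  fix t :: nat
  assume t: "nat \<lceil>1 / e^2\<rceil> + 2 \<le> t"
  have "sqrt (1 / e^2) \<le> sqrt (real t)"
    using t by (intro real_sqrt_le_mono) linarith
  hence "1 \<le> e * sqrt (real t)"
    using e by (simp add: real_sqrt_divide field_simps)
  hence "1 / (16 * e * sqrt (real t)) \<le> 1/3"
    by (simp add: field_simps)
  hence "1 / (16 * e * sqrt (real t)) \<le> v_value e t"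
    using v_value_lower[OF e, of t] t by linarith
  thus "inverse e / (16 * sqrt (real t)) \<le> v_value e t"
    by (simp add: field_simps)
qed

lemma W_mat_mult:
  assumes "finite V" "i \<in> V"
  shows "(\<Sum>j\<in>V. W_mat V E e i j * p j) = p i + (\<Sum>j\<in>V - {i}. if E i j then e * (p j - p i) else 0)"
proof -
  define w where "w j = (if E i j then e else 0)" for j
  have off_diag: "(\<Sum>j\<in>V - {i}. W_mat V E e i j * p j) = (\<Sum>j\<in>V - {i}. w j * p j)"
    by (intro sum.cong) (auto simp: W_mat_def w_def)
  have diag: "W_mat V E e i i * p i = p i - (\<Sum>j\<in>V - {i}. w j * p i)"
    by (simp add: W_mat_def w_def sum_distrib_left algebra_simps)
  have "(\<Sum>j\<in>V. W_mat V E e i j * p j) = W_mat V E e i i * p i + (\<Sum>j\<in>V - {i}. W_mat V E e i j * p j)"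
    using assms by (simp add: sum.remove)
  also have "\<dots> = p i + (\<Sum>j\<in>V - {i}. w j * (p j - p i))"
    unfolding off_diag diag by (simp add: right_diff_distrib sum_subtractf)
  also have "\<dots> = p i + (\<Sum>j\<in>V - {i}. if E i j then e * (p j - p i) else 0)"
    unfolding w_def by (intro arg_cong[where f = "(+) (p i)"] sum.cong) auto
  finally show ?thesis .
qed

lemma Gn_W_mult_blockwise:
  assumes "i \<in> Gn_verts n"
  shows "(\<Sum>j\<in>Gn_verts n. W_mat (Gn_verts n) (Gn_edge n) e i j * (if j < n then a else b))
       = (if i < n then a + e * (b - a) else b + e * (a - b))"
proof -
  define p where "p j = (if j < n then a else b)" for j
  define partner where "partner = (if i < n then i + n else i - n)"
  \<comment> \<open>\<open>p\<close> is constant on each clique, so only the edge \<open>{u\<^sub>k, v\<^sub>k}\<close> at \<open>i\<close> contributes\<close>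
  have "(\<Sum>j\<in>Gn_verts n - {i}. if Gn_edge n i j then e * (p j - p i) else 0)
      = (\<Sum>j\<in>Gn_verts n - {i}. if j = partner then e * (p j - p i) else 0)"
    using assms by (intro sum.cong) (auto simp: Gn_edge_def Gn_verts_def p_def partner_def)
  also have "\<dots> = e * (p partner - p i)"
    using assms by (auto simp: Gn_verts_def partner_def)
  moreover have "partner < n \<longleftrightarrow> \<not> i < n"
    using assms by (auto simp: partner_def Gn_verts_def)
  ultimately show ?thesis
    using W_mat_mult[of "Gn_verts n" i "Gn_edge n" e p] assms
    by (simp add: Gn_verts_def p_def)
qed

lemma glob_F_eq:
  assumes "0 < n"
  shows "glob_F n \<gamma> z = (\<gamma> * \<bar>z\<bar> + \<bar>z - 1\<bar> / 2) / 2"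
proof -
  have "(\<Sum>i\<in>Gn_verts n. loc_f n \<gamma> i z)
      = (\<Sum>i\<in>{0..<n}. loc_f n \<gamma> i z) + (\<Sum>i\<in>{n..<2*n}. loc_f n \<gamma> i z)"
    by (simp add: Gn_verts_def atLeast0LessThan[symmetric] sum.atLeastLessThan_concat)
  also have "\<dots> = (\<Sum>i\<in>{0..<n}. \<gamma> * \<bar>z\<bar>) + (\<Sum>i\<in>{n..<2*n}. \<bar>z - 1\<bar> / 2)"
    by (intro arg_cong2[where f = "(+)"] sum.cong) (auto simp: loc_f_def)
  also have "\<dots> = real n * (\<gamma> * \<bar>z\<bar>) + real n * (\<bar>z - 1\<bar> / 2)"
    by simp
  finally show ?thesis
    using assms by (simp add: glob_F_def field_simps)
qed

lemma glob_F_strict_min: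
  assumes "0 < n" "1/2 < \<gamma>" "y \<noteq> 0"
  shows "glob_F n \<gamma> 0 < glob_F n \<gamma> y"
proof -
  have "1/2 - \<bar>y\<bar>/2 \<le> \<bar>y - 1\<bar> / 2" by simp
  moreover have "\<bar>y\<bar>/2 < \<gamma> * \<bar>y\<bar>" using assms(2,3) by simp
  ultimately show ?thesis using assms(1) by (simp add: glob_F_eq)
qed

lemma is_subgradient_abs_0:
  assumes "\<bar>g\<bar> \<le> c"
  shows "is_subgradient (\<lambda>x. c * \<bar>x\<bar>) 0 g"
  unfolding is_subgradient_def
proof
  fix y :: real
  have "g * y \<le> \<bar>g\<bar> * \<bar>y\<bar>" by (simp add: abs_mult[symmetric])
  also have "\<dots> \<le> c * \<bar>y\<bar>" using assms by (simp add: mult_right_mono)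
  finally show "c * \<bar>0\<bar> + g * (y - 0) \<le> c * \<bar>y\<bar>" by simp
qed

lemma is_subgradient_abs_shift:
  assumes "0 \<le> c"
  shows "is_subgradient (\<lambda>x. c * \<bar>x - b\<bar>) y (if y < b then -c else c)"
  using assms by (auto simp: is_subgradient_def abs_if algebra_simps intro: mult_right_mono)

lemma proj_box_id: "\<bar>y\<bar> \<le> a \<Longrightarrow> proj_box a y = y"
  by (auto simp: proj_box_def)

text \<open>The point the \<open>u\<close>-nodes are projected to: averaging it with weight \<open>\<epsilon>\<close> against the
  \<open>v\<close>-point \<open>v_step t (v_value e t)\<close> gives exactly \<open>0\<close>.\<close>

definition u_value :: "real \<Rightarrow> nat \<Rightarrow> real" where
  "u_value e t = - e * v_step t (v_value e t) / (1 - e)"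

definition traj :: "nat \<Rightarrow> real \<Rightarrow> nat \<Rightarrow> nat \<Rightarrow> real" where
  "traj n e t i = (if i < n then 0 else v_value e t)"

definition subgrads :: "nat \<Rightarrow> real \<Rightarrow> nat \<Rightarrow> nat \<Rightarrow> real" where
  "subgrads n e t i =
     (if i < n then - sqrt (real t) * u_value e t else if v_value e t < 1 then - (1/2) else 1/2)"

lemma u_value_scaled_bound:
  assumes e: "0 < e" "e \<le> 1/4" and t: "1 \<le> t"
  shows "\<bar>sqrt (real t) * u_value e t\<bar> \<le> 3"
proof -
  define z where "z = v_step t (v_value e t)"
  have z: "0 \<le> z" "z \<le> v_value e t + half_step t"
    using v_step_bounds[OF t] v_value_bounds[OF e t] v_step_le[OF t] by (auto simp: z_def)
  have "e * z * sqrt (real t) \<le> e * (v_value e t + half_step t) * sqrt (real t)"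
    using z e by (intro mult_right_mono mult_left_mono) auto
  also have "\<dots> = e * v_value e t * sqrt (real t) + e/2"
    using t by (simp add: half_step_def field_simps)
  also have "\<dots> \<le> 2 + 1/8"
    using v_value_upper[OF e t] e t by (simp add: field_simps)
  finally have "e * z * sqrt (real t) \<le> 2 + 1/8" .
  hence "e * z * sqrt (real t) \<le> 3 * (1 - e)"
    using e by (simp add: algebra_simps)
  thus ?thesis
    using z e by (simp add: u_value_def z_def abs_mult field_simps)
qed

lemma proj_traj_step:
  assumes e: "0 < e" "e \<le> 1/4" and t: "1 \<le> t"
  shows "proj_box 6 (traj n e t j - 1 / sqrt (real t) * subgrads n e t j)
       = (if j < n then u_value e t else v_step t (v_value e t))"
proof (cases "j < n")
  case True
  have "\<bar>u_value e t\<bar> \<le> \<bar>sqrt (real t) * u_value e t\<bar>"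
    using t by (simp add: abs_mult mult_le_cancel_right1)
  thus ?thesis
    using True t u_value_scaled_bound[OF e t] by (simp add: traj_def subgrads_def proj_box_id)
next
  case False
  have "traj n e t j - 1 / sqrt (real t) * subgrads n e t j = v_step t (v_value e t)"
    using False by (simp add: traj_def subgrads_def v_step_def half_step_def)
  moreover have "0 \<le> v_step t (v_value e t) \<and> v_step t (v_value e t) \<le> 3/2"
    using v_step_bounds[OF t] v_value_bounds[OF e t] by blast
  ultimately show ?thesis
    using False by (simp add: proj_box_id)
qed

lemma subgrads_is_subgradient:
  assumes e: "0 < e" "e \<le> 1/4" and t: "1 \<le> t"
  shows "is_subgradient (loc_f n 3 i) (traj n e t i) (subgrads n e t i)"
proof (cases "i < n")
  case True
  have "loc_f n 3 i = (\<lambda>x. 3 * \<bar>x\<bar>)"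
    using True by (simp add: loc_f_def fun_eq_iff)
  thus ?thesis
    using True is_subgradient_abs_0 u_value_scaled_bound[OF e t] by (simp add: traj_def subgrads_def)
next
  case False
  have "loc_f n 3 i = (\<lambda>x. 1/2 * \<bar>x - 1\<bar>)"
    using False by (simp add: loc_f_def fun_eq_iff)
  thus ?thesis
    using False is_subgradient_abs_shift[of "1/2" 1 "v_value e t"]
    by (simp add: traj_def subgrads_def split del: if_split)
qed

lemma traj_is_trajectory:
  assumes e: "0 < e" "e \<le> 1/4"
  shows "is_trajectory n 3 6 e (subgrads n e) (traj n e)"
  unfolding is_trajectory_def
proof (intro conjI allI impI ballI)
  fix t i :: nat
  assume t: "1 \<le> t" and i: "i \<in> Gn_verts n"
  define z where "z = v_step t (v_value e t)"
  have "(\<Sum>j\<in>Gn_verts n. W_mat (Gn_verts n) (Gn_edge n) e i j *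
          proj_box 6 (traj n e t j - 1 / sqrt (real t) * subgrads n e t j))
      = (\<Sum>j\<in>Gn_verts n. W_mat (Gn_verts n) (Gn_edge n) e i j * (if j < n then u_value e t else z))"
    unfolding z_def using proj_traj_step[OF e t] by simp
  also have "\<dots> = (if i < n then u_value e t + e * (z - u_value e t) else z + e * (u_value e t - z))"
    using Gn_W_mult_blockwise[OF i] .
  also have "\<dots> = traj n e (t + 1) i"
    using e t by (simp add: traj_def u_value_def contraction_def z_def field_simps)
  finally show "traj n e (t + 1) i = (\<Sum>j\<in>Gn_verts n. W_mat (Gn_verts n) (Gn_edge n) e i j *
          proj_box 6 (traj n e t j - 1 / sqrt (real t) * subgrads n e t j))" ..
qed (use subgrads_is_subgradient[OF e] in \<open>auto simp: traj_def\<close>)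

theorem theorem2:
  shows "\<exists>\<gamma>::real. \<exists>a::real. \<gamma> > 1 \<and> a > 0 \<and>
    (\<forall>n::nat. \<forall>eps::real. n \<ge> 4 \<and> 0 < eps \<and> eps \<le> 1 / real n \<longrightarrow>
      (\<exists>g x. is_trajectory n \<gamma> a eps g x \<and>
        (\<forall>y\<in>{-a..a}. y \<noteq> 0 \<longrightarrow> glob_F n \<gamma> 0 < glob_F n \<gamma> y) \<and>
        (\<forall>t\<ge>1. \<forall>i<n. x t i = 0) \<and>
        (\<forall>t\<ge>1. \<forall>i<n. x t (n + i) - 0 \<ge> 0 \<and> x t (n + i) - 0 = x t n - 0) \<and>
        (\<exists>t1. \<forall>t\<ge>t1. \<forall>i<n. x t (n + i) - 0 \<ge> inverse eps / (16 * sqrt (real t)))))"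
proof (rule exI[of _ 3], rule exI[of _ 6], intro conjI allI impI, goal_cases)
  case (3 n e)
  hence e: "0 < e" "e \<le> 1/4"
    using order_trans[of e "1 / real n" "1/4"] by (auto simp: field_simps)
  obtain t1 where t1: "\<forall>t\<ge>t1. inverse e / (16 * sqrt (real t)) \<le> v_value e t"
    using v_value_eventually_ge[OF e] by blast
  show ?case
    using traj_is_trajectory[OF e] glob_F_strict_min[of n 3] 3 v_value_bounds[OF e] t1
    by (intro exI[of _ "subgrads n e"] exI[of _ "traj n e"]) (auto simp: traj_def)
qed auto

end
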